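(* Consider the contextual bilateral trade problem in the one-bit feedback model. There exists a profit-maximizing algorithm that achieves regret $O(d\,6^d\log T)$ and enforces per-round budget balance.
   Context: Contextual bilateral trade: Let $\mathbb{B}=\{w\in\mathbb{R}^d:\|w\|_2\le 1\}$. There are two fixed vectors $s,b\in\mathbb{B}$ unknown to the learner. At each time $t=1,\dots,T$, the learner observes a context $x_t\in\mathbb{B}$ (the contexts and $s,b$ are fixed in advance by an oblivious adversary; this is an instance), and posts a price $p_t$ to the seller and $q_t$ to the buyer. Valuations: $s_t=\langle s,x_t\rangle$, $b_t=\langle b,x_t\rangle$; the trade happens iff $s_t\le p_t$ and $q_t\le b_t$. Profit: $\mathrm{Profit}_t(p_t,q_t)=(q_t-p_t)\,\mathbb{1}\{s_t\le p_t\}\mathbb{1}\{q_t\le b_t\}$. One-bit feedback: after each round the learner observes only $\mathbb{1}\{s_t\le p_t\}\cdot\mathbb{1}\{q_t\le b_t\}$. Regret of a (possibly randomized) algorithm $\mathcal{A}$: $R_T(\mathcal{A})=\sup_{\mathcal{I}}\mathbb{E}\big[\sum_{t=1}^T (b_t-s_t)_+-\sum_{t=1}^T\mathrm{Profit}_t(p_t,q_t)\big]$, expectation over the algorithm's randomness. Per-round budget balance: $p_t\le q_t$ for every $t$. The $O(\cdot)$ hides absolute constants independent of $d$ and $T$. *)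

theory Defs
  imports "HOL-Probability.Probability"
begin

text \<open>Vectors of R^d are represented as functions nat => real vanishing outside {..<d}.\<close>
type_synonym vec = "nat \<Rightarrow> real"

definition unit_ball :: "nat \<Rightarrow> vec set" where
  "unit_ball d = {w. (\<forall>i\<ge>d. w i = 0) \<and> (\<Sum>i<d. (w i)\<^sup>2) \<le> 1}"

definition ip :: "nat \<Rightarrow> vec \<Rightarrow> vec \<Rightarrow> real" where
  "ip d u v = (\<Sum>i<d. u i * v i)"

text \<open>A history entry: (context, seller price p, buyer price q, one-bit feedback).\<close>
type_synonym hist = "(vec \<times> real \<times> real \<times> bool) list"

type_synonym learner = "hist \<Rightarrow> vec \<Rightarrow> (real \<times> real) pmf"

definition budget_balanced :: "learner \<Rightarrow> bool" where
  "budget_balanced A \<longleftrightarrow> (\<forall>h x p q. (p, q) \<in> set_pmf (A h x) \<longrightarrow> p \<le> q)"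

text \<open>Distribution of the history after t rounds (rounds indexed 0, ..., t-1),
  against the oblivious instance (s, b, x).\<close>
primrec run :: "nat \<Rightarrow> learner \<Rightarrow> vec \<Rightarrow> vec \<Rightarrow> (nat \<Rightarrow> vec) \<Rightarrow> nat \<Rightarrow> hist pmf" where
  "run d A s b x 0 = return_pmf []"
| "run d A s b x (Suc t) =
     do { h \<leftarrow> run d A s b x t;
          pq \<leftarrow> A h (x t);
          return_pmf (h @ [(x t, fst pq, snd pq,
                            ip d s (x t) \<le> fst pq \<and> snd pq \<le> ip d b (x t))]) }"

text \<open>Realized profit of a history: (q - p) on rounds where the trade happened
  (the feedback bit equals the trade indicator).\<close>
definition hist_profit :: "hist \<Rightarrow> real" where
  "hist_profit h = (\<Sum>(x, p, q, f) \<leftarrow> h. if f then q - p else 0)"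

definition regret :: "nat \<Rightarrow> learner \<Rightarrow> vec \<Rightarrow> vec \<Rightarrow> (nat \<Rightarrow> vec) \<Rightarrow> nat \<Rightarrow> real" where
  "regret d A s b x T =
     (\<Sum>t<T. max 0 (ip d b (x t) - ip d s (x t)))
     - measure_pmf.expectation (run d A s b x T) hist_profit"

end

theory Submission
  imports Defs "HOL-Analysis.Harmonic_Numbers"
begin

text \<open>For each party the learner keeps the observations it can attribute to that party, and the
  knowledge set of all vectors of a slightly enlarged box satisfying them up to a slack
  \<open>r = \<epsilon>\<^sub>t / 16\<close>, \<open>\<epsilon>\<^sub>t = 1 / (t + 1)\<close>; the range of the current valuation is the range of
  \<open>\<langle>w, x\<^sub>t\<rangle>\<close> over it.  An observation that cuts off more than a fifth of a range removes from
  the (convex) knowledge set a copy of itself scaled by \<open>1 / 5\<close>, so its volume drops by the factor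
  \<open>1 - 5 ^ (-d)\<close>; the slack keeps a cube of side \<open>2 r / d\<close> around the truth inside, so the
  log-volume can only decrease by \<open>O (d log (d T))\<close> overall.  The prices are chosen so that in
  every round the expected profit plus \<open>16 d\<close> times the probability of such a deep cut is at
  least the gain from trade minus \<open>2 \<epsilon>\<^sub>t\<close>.  Charging \<open>16 d 5 ^ d\<close> per unit of log-volume
  therefore bounds the regret by \<open>2 H\<^sub>T + 32 d\<^sup>2 5 ^ d ln (32 d (T + 1)) = O (d 6 ^ d log T)\<close>.\<close>

section \<open>Convex combinations and inner products\<close>

definition lerp :: "real \<Rightarrow> vec \<Rightarrow> vec \<Rightarrow> vec" where
  "lerp l f g = (\<lambda>i. (1 - l) * f i + l * g i)"

definition vec_convex :: "vec set \<Rightarrow> bool" where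
  "vec_convex S \<longleftrightarrow> (\<forall>f\<in>S. \<forall>g\<in>S. \<forall>l. 0 \<le> l \<longrightarrow> l \<le> 1 \<longrightarrow> lerp l f g \<in> S)"

lemma unit_ball_abs_le_1:
  assumes "v \<in> unit_ball d" "i < d"
  shows "\<bar>v i\<bar> \<le> 1"
proof -
  have "(v i)\<^sup>2 \<le> (\<Sum>j<d. (v j)\<^sup>2)"
    using assms(2) by (intro member_le_sum) auto
  also have "\<dots> \<le> 1"
    using assms(1) by (simp add: unit_ball_def)
  finally show ?thesis
    by (simp add: abs_square_le_1)
qed

lemma abs_ip_le:
  assumes "\<And>i. i < d \<Longrightarrow> \<bar>f i\<bar> \<le> R" "x \<in> unit_ball d"
  shows "\<bar>ip d f x\<bar> \<le> real d * R"
proof -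
  have "\<bar>ip d f x\<bar> \<le> (\<Sum>i<d. \<bar>f i\<bar> * \<bar>x i\<bar>)"
    unfolding ip_def abs_mult[symmetric] by (rule sum_abs)
  also have "\<dots> \<le> (\<Sum>i<d. R)"
    using assms unit_ball_abs_le_1 by (intro sum_mono) (simp add: mult_le_one order_trans[OF mult_left_le])
  finally show ?thesis
    by simp
qed

lemma ip_lerp: "ip d (lerp l f g) x = (1 - l) * ip d f x + l * ip d g x"
  unfolding ip_def lerp_def by (simp add: sum_distrib_left sum.distrib[symmetric] algebra_simps)

lemma ip_restrict: "ip d (restrict v {..<d}) x = ip d v x"
  unfolding ip_def by simp

section \<open>Volume under homotheties\<close>

abbreviation lborel_vec :: "nat \<Rightarrow> vec measure" where
  "lborel_vec d \<equiv> PiM {..<d} (\<lambda>_. lborel)"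

interpretation lborel_product: product_sigma_finite "\<lambda>_::nat. lborel :: real measure"
  by standard

lemma ip_measurable[measurable]: "(\<lambda>f. ip d f x) \<in> borel_measurable (lborel_vec d)"
  unfolding ip_def by measurable

lemma emeasure_box:
  assumes "\<And>i. i < d \<Longrightarrow> a i \<le> b i"
  shows "emeasure (lborel_vec d) (Pi\<^sub>E {..<d} (\<lambda>i. {a i..b i})) = ennreal (\<Prod>i<d. b i - a i)"
proof -
  have "emeasure (lborel_vec d) (Pi\<^sub>E {..<d} (\<lambda>i. {a i..b i})) = (\<Prod>i<d. ennreal (b i - a i))"
    using assms by (simp add: lborel_product.emeasure_PiM)
  also have "\<dots> = ennreal (\<Prod>i<d. b i - a i)"
    using assms by (intro prod_ennreal) simp
  finally show ?thesis .
qed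

definition inv_homothety :: "nat \<Rightarrow> vec \<Rightarrow> real \<Rightarrow> vec \<Rightarrow> vec" where
  "inv_homothety d c l g = (\<lambda>i\<in>{..<d}. (g i - c i) / l)"

lemma inv_homothety_measurable: "inv_homothety d c l \<in> lborel_vec d \<rightarrow>\<^sub>M lborel_vec d"
  unfolding inv_homothety_def by measurable

lemma emeasure_lborel_inv_homothety:
  fixes A :: "real set"
  assumes "0 < l" "A \<in> sets borel"
  shows "emeasure lborel {y. (y - c) / l \<in> A} = l * emeasure lborel A"
proof -
  have "emeasure lborel A
      = emeasure (density (distr lborel borel (\<lambda>x. - c / l + 1 / l * x)) (\<lambda>_. ennreal \<bar>1 / l\<bar>)) A"
    using lborel_real_affine[of "1 / l" "- c / l"] assms(1) by simp
  also have "\<dots> = 1 / l * emeasure lborel ((\<lambda>x. - c / l + 1 / l * x) -` A)"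
    using assms by (simp add: emeasure_density_const emeasure_distr)
  also have "(\<lambda>x. - c / l + 1 / l * x) -` A = {y. (y - c) / l \<in> A}"
    by (auto simp: diff_divide_distrib)
  finally show ?thesis
    using assms(1) by (simp add: mult.assoc[symmetric] ennreal_mult[symmetric])
qed

lemma density_distr_inv_homothety:
  assumes "0 < l"
  shows "density (distr (lborel_vec d) (lborel_vec d) (inv_homothety d c l)) (\<lambda>_. 1 / l ^ d)
    = lborel_vec d"
proof (rule lborel_product.PiM_eqI)
  fix A :: "nat \<Rightarrow> real set"
  assume A: "\<And>i. i \<in> {..<d} \<Longrightarrow> A i \<in> sets lborel"
  have pre: "inv_homothety d c l -` Pi\<^sub>E {..<d} A \<inter> space (lborel_vec d)
      = Pi\<^sub>E {..<d} (\<lambda>i. {y. (y - c i) / l \<in> A i})"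
    by (auto simp: inv_homothety_def space_PiM PiE_def Pi_def extensional_def)
  have pre_sets: "{y. (y - c i) / l \<in> A i} \<in> sets lborel" if "i < d" for i
  proof -
    have "A i \<in> sets borel"
      using A that by simp
    then show ?thesis
      by measurable
  qed
  have "emeasure (density (distr (lborel_vec d) (lborel_vec d) (inv_homothety d c l)) (\<lambda>_. 1 / l ^ d))
      (Pi\<^sub>E {..<d} A) = 1 / l ^ d * (\<Prod>i<d. l * emeasure lborel (A i))"
  proof -
    have "emeasure (lborel_vec d) (Pi\<^sub>E {..<d} (\<lambda>i. {y. (y - c i) / l \<in> A i}))
        = (\<Prod>i<d. l * emeasure lborel (A i))"
      using A pre_sets assms
      by (subst lborel_product.emeasure_PiM) (auto intro!: prod.cong emeasure_lborel_inv_homothety)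
    then show ?thesis
      using A by (simp add: emeasure_density_const emeasure_distr inv_homothety_measurable pre
          sets_PiM_I_finite)
  qed
  also have "\<dots> = (\<Prod>i<d. emeasure lborel (A i))"
    using assms by (simp add: prod.distrib ennreal_power mult.assoc[symmetric] ennreal_mult[symmetric])
  finally show "emeasure (density (distr (lborel_vec d) (lborel_vec d) (inv_homothety d c l))
      (\<lambda>_. 1 / l ^ d)) (Pi\<^sub>E {..<d} A) = (\<Prod>i\<in>{..<d}. emeasure lborel (A i))"
    by simp
qed simp_all

lemma measure_inv_homothety_vimage:
  assumes "0 < l" "S \<in> sets (lborel_vec d)"
  shows "measure (lborel_vec d) (inv_homothety d c l -` S \<inter> space (lborel_vec d))
    = l ^ d * measure (lborel_vec d) S"
proof -
  have "emeasure (lborel_vec d) S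
      = 1 / l ^ d * emeasure (lborel_vec d) (inv_homothety d c l -` S \<inter> space (lborel_vec d))"
    by (subst density_distr_inv_homothety[OF assms(1), symmetric])
      (simp add: assms emeasure_density_const emeasure_distr inv_homothety_measurable)
  then have "emeasure (lborel_vec d) (inv_homothety d c l -` S \<inter> space (lborel_vec d))
      = l ^ d * emeasure (lborel_vec d) S"
    using assms(1) by (simp add: mult.assoc[symmetric] ennreal_mult[symmetric])
  then show ?thesis
    using assms(1) by (simp add: measure_def enn2real_mult)
qed

lemma lerp_inv_homothety:
  assumes "g \<in> space (lborel_vec d)" "p \<in> space (lborel_vec d)" "0 < l"
  shows "lerp l p (inv_homothety d (\<lambda>i. (1 - l) * p i) l g) = g"
proof
  fix i
  show "lerp l p (inv_homothety d (\<lambda>i. (1 - l) * p i) l g) i = g i"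
  proof (cases "i < d")
    case True
    then show ?thesis
      using assms(3) by (simp add: inv_homothety_def lerp_def)
  next
    case False
    then have "g i = undefined" "p i = undefined"
      using assms(1,2) by (auto simp: space_PiM PiE_def extensional_def)
    then show ?thesis
      using False by (simp add: inv_homothety_def lerp_def algebra_simps)
  qed
qed

lemma measure_avoiding_homothetic_copy:
  assumes S: "S \<in> fmeasurable (lborel_vec d)" "vec_convex S" and p: "p \<in> S" and l: "0 < l" "l \<le> 1"
    and S': "S' \<in> sets (lborel_vec d)" "S' \<subseteq> S" and avoid: "\<And>y. y \<in> S \<Longrightarrow> lerp l p y \<notin> S'"
  shows "measure (lborel_vec d) S' \<le> (1 - l ^ d) * measure (lborel_vec d) S"
proof -
  define h where "h = inv_homothety d (\<lambda>i. (1 - l) * p i) l"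
  define Img where "Img = h -` S \<inter> space (lborel_vec d)"
  have "S \<subseteq> space (lborel_vec d)"
    using S(1) sets.sets_into_space by (auto simp: fmeasurable_def)
  then have Img: "h g \<in> S" "lerp l p (h g) = g" if "g \<in> Img" for g
    using that p l(1) unfolding Img_def h_def by (auto simp: lerp_inv_homothety)
  have Img_sets: "Img \<in> sets (lborel_vec d)"
    unfolding Img_def h_def using S(1) by (auto intro: measurable_sets[OF inv_homothety_measurable])
  have "Img \<subseteq> S"
    using Img S(2) p l unfolding vec_convex_def by (metis less_imp_le subsetI)
  moreover have "g \<notin> Img" if "g \<in> S'" for g
    using Img avoid that by metis
  then have "S' \<subseteq> S - Img"
    using S'(2) by blast
  ultimately have "measure (lborel_vec d) S' \<le> measure (lborel_vec d) (S - Img)"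
    using S(1) S'(1) Img_sets by (intro measure_mono_fmeasurable fmeasurable_Diff)
  also have "\<dots> = measure (lborel_vec d) S - measure (lborel_vec d) Img"
    using S(1) Img_sets \<open>Img \<subseteq> S\<close> by (intro measure_Diff) (auto simp: fmeasurable_def)
  also have "measure (lborel_vec d) Img = l ^ d * measure (lborel_vec d) S"
    unfolding Img_def h_def using l(1) S(1) by (simp add: measure_inv_homothety_vimage fmeasurable_def)
  finally show ?thesis
    by (simp add: algebra_simps)
qed

text \<open>The copy of \<open>S\<close> scaled by \<open>l\<close> towards a near-maximiser of \<open>\<phi>\<close> lies where \<open>\<phi> > c\<close>,
  hence outside \<open>S'\<close>.\<close>
lemma measure_halfspace_cut:
  fixes \<phi> :: "vec \<Rightarrow> real"
  assumes S: "S \<in> fmeasurable (lborel_vec d)" "vec_convex S" "S \<noteq> {}"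
    and lin: "\<And>f g. \<phi> (lerp l f g) = (1 - l) * \<phi> f + l * \<phi> g"
    and lower: "\<And>f. f \<in> S \<Longrightarrow> m \<le> \<phi> f" and upper: "bdd_above (\<phi> ` S)"
    and l: "0 < l" "l \<le> 1"
    and S': "S' \<in> sets (lborel_vec d)" "S' \<subseteq> S" "\<And>g. g \<in> S' \<Longrightarrow> \<phi> g \<le> c"
    and cut: "c < (1 - l) * (SUP f\<in>S. \<phi> f) + l * m"
  shows "measure (lborel_vec d) S' \<le> (1 - l ^ d) * measure (lborel_vec d) S"
proof -
  obtain p where p: "p \<in> S" "c < (1 - l) * \<phi> p + l * m"
  proof (cases "l = 1")
    case True
    then show ?thesis
      using that cut S(3) by auto
  next
    case False
    then have "(c - l * m) / (1 - l) < (SUP f\<in>S. \<phi> f)"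
      using cut l by (simp add: field_simps)
    then obtain p where "p \<in> S" "(c - l * m) / (1 - l) < \<phi> p"
      using less_cSUP_iff[OF S(3) upper] by blast
    then show ?thesis
      using that False l by (simp add: field_simps)
  qed
  show ?thesis
  proof (rule measure_avoiding_homothetic_copy[OF S(1,2) p(1) l S'(1,2)])
    fix y assume "y \<in> S"
    then have "l * m \<le> l * \<phi> y"
      using lower l by (simp add: mult_left_mono)
    then have "c < \<phi> (lerp l p y)"
      using p(2) lin[of p y] by linarith
    then show "lerp l p y \<notin> S'"
      using S'(3) by force
  qed
qed

section \<open>Knowledge sets\<close>

text \<open>An observation \<open>(y, M, True)\<close> records \<open>\<langle>v, y\<rangle> \<le> M\<close>, and \<open>(y, M, False)\<close> records
  \<open>M \<le> \<langle>v, y\<rangle>\<close>.\<close>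
type_synonym obs = "vec \<times> real \<times> bool"

definition consistent :: "nat \<Rightarrow> vec \<Rightarrow> obs list \<Rightarrow> bool" where
  "consistent d v F \<longleftrightarrow>
     (\<forall>(y, M, u)\<in>set F. y \<in> unit_ball d \<and> (if u then ip d v y \<le> M else M \<le> ip d v y))"

text \<open>Relaxing every constraint by the slack \<open>r\<close> keeps a cube of side \<open>2 r / d\<close> around the truth
  inside the set, so its volume never drops below \<open>(2 r / d) ^ d\<close>.\<close>
definition knowledge_set :: "nat \<Rightarrow> real \<Rightarrow> obs list \<Rightarrow> vec set" where
  "knowledge_set d r F = {f \<in> space (lborel_vec d). (\<forall>i<d. \<bar>f i\<bar> \<le> 1 + r / d) \<and>
     (\<forall>(y, M, u)\<in>set F. if u then ip d f y \<le> M + r else M - r \<le> ip d f y)}"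

lemma knowledge_set_sets: "knowledge_set d r F \<in> sets (lborel_vec d)"
  unfolding knowledge_set_def by measurable

lemma knowledge_set_mono:
  assumes "r' \<le> r" "set F \<subseteq> set F'"
  shows "knowledge_set d r' F' \<subseteq> knowledge_set d r F"
proof
  fix f assume f: "f \<in> knowledge_set d r' F'"
  have "r' / real d \<le> r / real d"
    using assms(1) by (simp add: divide_right_mono)
  then have "\<bar>f i\<bar> \<le> 1 + r / d" if "i < d" for i
    using f that unfolding knowledge_set_def by fastforce
  moreover have "if u then ip d f y \<le> M + r else M - r \<le> ip d f y" if "(y, M, u) \<in> set F" for y M u
  proof -
    have "if u then ip d f y \<le> M + r' else M - r' \<le> ip d f y"
      using f that assms(2) unfolding knowledge_set_def by blast
    then show ?thesis
      using assms(1) by (cases u) auto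
  qed
  ultimately show "f \<in> knowledge_set d r F"
    using f unfolding knowledge_set_def by blast
qed

lemma knowledge_set_convex: "vec_convex (knowledge_set d r F)"
  unfolding vec_convex_def
proof (intro ballI allI impI)
  fix f g and l :: real assume f: "f \<in> knowledge_set d r F" and g: "g \<in> knowledge_set d r F" and l: "0 \<le> l" "l \<le> 1"
  have "lerp l f g \<in> space (lborel_vec d)"
    using f g by (auto simp: knowledge_set_def space_PiM PiE_def extensional_def lerp_def algebra_simps)
  moreover have "\<bar>lerp l f g i\<bar> \<le> 1 + r / d" if "i < d" for i
  proof -
    have "\<bar>lerp l f g i\<bar> \<le> (1 - l) * \<bar>f i\<bar> + l * \<bar>g i\<bar>"
      using l unfolding lerp_def by (metis abs_mult abs_of_nonneg abs_triangle_ineq diff_ge_0_iff_ge)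
    also have "\<dots> \<le> (1 - l) * (1 + r / d) + l * (1 + r / d)"
      using f g l that unfolding knowledge_set_def by (intro add_mono mult_left_mono) auto
    also have "\<dots> = 1 + r / d"
      by (simp only: distrib_right[symmetric]) simp
    finally show ?thesis .
  qed
  moreover have "if u then ip d (lerp l f g) y \<le> M + r else M - r \<le> ip d (lerp l f g) y"
    if "(y, M, u) \<in> set F" for y M u
  proof -
    have fg: "if u then ip d h y \<le> M + r else M - r \<le> ip d h y" if "h \<in> {f, g}" for h
      using f g \<open>(y, M, u) \<in> set F\<close> that unfolding knowledge_set_def by fastforce
    show ?thesis
    proof (cases u)
      case True
      then have "ip d f y \<le> M + r" "ip d g y \<le> M + r"
        using fg by auto
      then show ?thesis
        using True l by (simp add: ip_lerp convex_bound_le)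
    next
      case False
      then have "M - r \<le> ip d f y" "M - r \<le> ip d g y"
        using fg by auto
      then have "(1 - l) * (M - r) + l * (M - r) \<le> (1 - l) * ip d f y + l * ip d g y"
        using l by (intro add_mono mult_left_mono) auto
      then show ?thesis
        using False by (simp add: ip_lerp algebra_simps)
    qed
  qed
  ultimately show "lerp l f g \<in> knowledge_set d r F"
    unfolding knowledge_set_def by auto
qed

lemma knowledge_set_subset_box:
  "knowledge_set d r F \<subseteq> Pi\<^sub>E {..<d} (\<lambda>_. {- (1 + r / d)..1 + r / d})"
  by (auto simp: knowledge_set_def space_PiM PiE_iff extensional_def abs_le_iff)

lemma knowledge_set_fmeasurable:
  assumes "0 \<le> r"
  shows "knowledge_set d r F \<in> fmeasurable (lborel_vec d)"
proof (rule fmeasurableI2[OF _ knowledge_set_subset_box])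
  show "Pi\<^sub>E {..<d} (\<lambda>_. {- (1 + r / d)..1 + r / d}) \<in> fmeasurable (lborel_vec d)"
    using assms by (auto simp: fmeasurable_def emeasure_box sets_PiM_I_finite)
qed (rule knowledge_set_sets)

lemma measure_knowledge_set_le:
  assumes "0 \<le> r" "r \<le> real d"
  shows "measure (lborel_vec d) (knowledge_set d r F) \<le> 4 ^ d"
proof -
  have "measure (lborel_vec d) (knowledge_set d r F)
      \<le> measure (lborel_vec d) (Pi\<^sub>E {..<d} (\<lambda>_. {- (1 + r / d)..1 + r / d}))"
    using assms(1)
    by (intro measure_mono_fmeasurable[OF knowledge_set_subset_box knowledge_set_sets])
      (auto simp: fmeasurable_def emeasure_box sets_PiM_I_finite)
  also have "\<dots> = (2 + 2 * (r / d)) ^ d"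
    using assms(1) by (simp add: measure_def emeasure_box)
  also have "\<dots> \<le> 4 ^ d"
    using assms by (intro power_mono) (auto simp: divide_le_eq)
  finally show ?thesis .
qed

lemma cube_subset_knowledge_set:
  assumes "consistent d v F" "v \<in> unit_ball d" "d \<ge> 1"
  shows "Pi\<^sub>E {..<d} (\<lambda>i. {v i - r / d..v i + r / d}) \<subseteq> knowledge_set d r F"
proof
  fix g assume g: "g \<in> Pi\<^sub>E {..<d} (\<lambda>i. {v i - r / d..v i + r / d})"
  have close: "\<bar>g i - v i\<bar> \<le> r / d" if "i < d" for i
  proof -
    have "g i \<in> {v i - r / d..v i + r / d}"
      using g that by (auto simp: PiE_iff)
    then show ?thesis
      by (auto simp: abs_le_iff)
  qed
  have "\<bar>g i\<bar> \<le> 1 + r / d" if "i < d" for i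
    using close[OF that] unit_ball_abs_le_1[OF assms(2) that] by linarith
  moreover have "\<bar>ip d g y - ip d v y\<bar> \<le> r" if "y \<in> unit_ball d" for y
  proof -
    have "\<bar>ip d (\<lambda>i. g i - v i) y\<bar> \<le> real d * (r / d)"
      using close that by (intro abs_ip_le) auto
    then show ?thesis
      using assms(3) by (simp add: ip_def sum_subtractf left_diff_distrib)
  qed
  ultimately show "g \<in> knowledge_set d r F"
    using g assms(1) unfolding knowledge_set_def consistent_def
    by (fastforce simp: space_PiM abs_le_iff split: if_splits)
qed

lemma measure_knowledge_set_ge:
  assumes "consistent d v F" "v \<in> unit_ball d" "d \<ge> 1" "0 \<le> r"
  shows "(2 * r / d) ^ d \<le> measure (lborel_vec d) (knowledge_set d r F)"
proof -
  have "(2 * r / d) ^ d = measure (lborel_vec d) (Pi\<^sub>E {..<d} (\<lambda>i. {v i - r / d..v i + r / d}))"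
    using assms(4) by (simp add: measure_def emeasure_box)
  also have "\<dots> \<le> measure (lborel_vec d) (knowledge_set d r F)"
    using assms by (intro measure_mono_fmeasurable[OF cube_subset_knowledge_set]
        knowledge_set_fmeasurable) (auto simp: sets_PiM_I_finite)
  finally show ?thesis .
qed

lemma restrict_mem_knowledge_set:
  assumes "consistent d v F" "v \<in> unit_ball d" "d \<ge> 1" "0 \<le> r"
  shows "restrict v {..<d} \<in> knowledge_set d r F"
proof -
  have "restrict v {..<d} \<in> Pi\<^sub>E {..<d} (\<lambda>i. {v i - r / d..v i + r / d})"
    using assms(4) by auto
  then show ?thesis
    using cube_subset_knowledge_set[OF assms(1-3)] by blast
qed

lemma ip_knowledge_set_bounds:
  assumes "f \<in> knowledge_set d r F" "x \<in> unit_ball d" "0 \<le> r"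
  shows "- (d + r) \<le> ip d f x" "ip d f x \<le> d + r"
proof -
  have "\<bar>ip d f x\<bar> \<le> real d * (1 + r / d)"
    using assms unfolding knowledge_set_def by (intro abs_ip_le) auto
  also have "\<dots> \<le> d + r"
    using assms(3) by (cases "d = 0") (simp_all add: algebra_simps)
  finally show "- (d + r) \<le> ip d f x" "ip d f x \<le> d + r"
    by linarith+
qed

definition knowledge_inf :: "nat \<Rightarrow> real \<Rightarrow> obs list \<Rightarrow> vec \<Rightarrow> real" where
  "knowledge_inf d r F x = (INF f\<in>knowledge_set d r F. ip d f x)"

definition knowledge_sup :: "nat \<Rightarrow> real \<Rightarrow> obs list \<Rightarrow> vec \<Rightarrow> real" where
  "knowledge_sup d r F x = (SUP f\<in>knowledge_set d r F. ip d f x)"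

lemma bdd_ip_knowledge_set:
  assumes "x \<in> unit_ball d" "0 \<le> r"
  shows "bdd_above ((\<lambda>f. ip d f x) ` knowledge_set d r F)"
    and "bdd_below ((\<lambda>f. ip d f x) ` knowledge_set d r F)"
  using ip_knowledge_set_bounds[OF _ assms] by (intro bdd_aboveI2 bdd_belowI2; blast)+

lemma knowledge_inf_le:
  assumes "f \<in> knowledge_set d r F" "x \<in> unit_ball d" "0 \<le> r"
  shows "knowledge_inf d r F x \<le> ip d f x"
  unfolding knowledge_inf_def using assms bdd_ip_knowledge_set(2) by (intro cINF_lower)

lemma le_knowledge_sup:
  assumes "f \<in> knowledge_set d r F" "x \<in> unit_ball d" "0 \<le> r"
  shows "ip d f x \<le> knowledge_sup d r F x"
  unfolding knowledge_sup_def using assms bdd_ip_knowledge_set(1) by (intro cSUP_upper)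

lemma knowledge_inf_ge:
  assumes "knowledge_set d r F \<noteq> {}" "x \<in> unit_ball d" "0 \<le> r"
  shows "- (d + r) \<le> knowledge_inf d r F x"
  unfolding knowledge_inf_def using ip_knowledge_set_bounds(1)[OF _ assms(2,3)]
  by (intro cINF_greatest[OF assms(1)]) blast

lemma knowledge_sup_le:
  assumes "knowledge_set d r F \<noteq> {}" "x \<in> unit_ball d" "0 \<le> r"
  shows "knowledge_sup d r F x \<le> d + r"
  unfolding knowledge_sup_def using ip_knowledge_set_bounds(2)[OF _ assms(2,3)]
  by (intro cSUP_least[OF assms(1)]) blast

lemma knowledge_inf_eq_uminus_Sup:
  "knowledge_inf d r F x = - (SUP f\<in>knowledge_set d r F. - ip d f x)"
  unfolding knowledge_inf_def Inf_real_def by (simp add: image_comp o_def)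

text \<open>The observation \<open>(x, M, u)\<close> removes more than the fraction \<open>l\<close> of the interval
  \<open>[lo, hi]\<close> of possible values of \<open>\<langle>v, x\<rangle>\<close>, beyond the slack \<open>r\<close>.\<close>
definition deep_cut :: "real \<Rightarrow> real \<Rightarrow> real \<Rightarrow> real \<Rightarrow> real \<Rightarrow> bool \<Rightarrow> bool" where
  "deep_cut l r lo hi M u \<longleftrightarrow>
     (if u then l * (hi - lo) < hi - M - r else l * (hi - lo) < M - r - lo)"

lemma measure_knowledge_set_cut:
  assumes ne: "knowledge_set d r F \<noteq> {}" and x: "x \<in> unit_ball d" and l: "0 < l" "l \<le> 1"
    and r: "0 \<le> r'" "r' \<le> r" and F: "set F \<subseteq> set F'" "(x, M, u) \<in> set F'"
    and cut: "deep_cut l r (knowledge_inf d r F x) (knowledge_sup d r F x) M u"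
  shows "measure (lborel_vec d) (knowledge_set d r' F')
    \<le> (1 - l ^ d) * measure (lborel_vec d) (knowledge_set d r F)"
proof -
  have r0: "0 \<le> r"
    using r by linarith
  note S = knowledge_set_fmeasurable[OF r0] knowledge_set_convex ne
  note S' = knowledge_set_sets knowledge_set_mono[OF r(2) F(1)]
  have obs: "if u then ip d g x \<le> M + r else M - r \<le> ip d g x" if "g \<in> knowledge_set d r' F'" for g
  proof -
    have "if u then ip d g x \<le> M + r' else M - r' \<le> ip d g x"
      using that F(2) unfolding knowledge_set_def by fastforce
    then show ?thesis
      using r(2) by (cases u) auto
  qed
  show ?thesis
  proof (cases u)
    case True
    show ?thesis
    proof (rule measure_halfspace_cut[OF S _ _ _ l S', where \<phi> = "\<lambda>f. ip d f x" and c = "M + r"])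
      show "ip d (lerp l f g) x = (1 - l) * ip d f x + l * ip d g x" for f g
        by (rule ip_lerp)
      show "knowledge_inf d r F x \<le> ip d f x" if "f \<in> knowledge_set d r F" for f
        using knowledge_inf_le[OF that x r0] .
      show "bdd_above ((\<lambda>f. ip d f x) ` knowledge_set d r F)"
        using bdd_ip_knowledge_set(1)[OF x r0] .
      show "ip d g x \<le> M + r" if "g \<in> knowledge_set d r' F'" for g
        using obs[OF that] True by simp
      show "M + r < (1 - l) * (SUP f\<in>knowledge_set d r F. ip d f x) + l * knowledge_inf d r F x"
        using cut True unfolding deep_cut_def knowledge_sup_def by (simp add: algebra_simps)
    qed
  next
    case False
    show ?thesis
    proof (rule measure_halfspace_cut[OF S _ _ _ l S', where \<phi> = "\<lambda>f. - ip d f x" and c = "r - M"])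
      show "- ip d (lerp l f g) x = (1 - l) * - ip d f x + l * - ip d g x" for f g
        by (simp add: ip_lerp algebra_simps)
      show "- knowledge_sup d r F x \<le> - ip d f x" if "f \<in> knowledge_set d r F" for f
        using le_knowledge_sup[OF that x r0] by simp
      show "bdd_above ((\<lambda>f. - ip d f x) ` knowledge_set d r F)"
        using ip_knowledge_set_bounds(1)[OF _ x r0] by (intro bdd_aboveI2[where M = "d + r"]) force
      show "- ip d g x \<le> r - M" if "g \<in> knowledge_set d r' F'" for g
        using obs[OF that] False by simp
      show "r - M < (1 - l) * (SUP f\<in>knowledge_set d r F. - ip d f x) + l * - knowledge_sup d r F x"
        using cut False unfolding deep_cut_def knowledge_inf_eq_uminus_Sup by (simp add: algebra_simps)
    qed
  qed
qed

lemma measure_knowledge_set_pos: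
  assumes "consistent d v F" "v \<in> unit_ball d" "d \<ge> 1" "0 < r"
  shows "0 < measure (lborel_vec d) (knowledge_set d r F)"
proof -
  have "0 < (2 * r / d) ^ d"
    using assms(3,4) by simp
  also have "\<dots> \<le> measure (lborel_vec d) (knowledge_set d r F)"
    using assms by (intro measure_knowledge_set_ge) auto
  finally show ?thesis .
qed

definition log_volume :: "nat \<Rightarrow> real \<Rightarrow> obs list \<Rightarrow> real" where
  "log_volume d r F = ln (measure (lborel_vec d) (knowledge_set d r F))"

lemma log_volume_ge:
  assumes "consistent d v F" "v \<in> unit_ball d" "d \<ge> 1" "0 < r"
  shows "real d * ln (2 * r / d) \<le> log_volume d r F"
proof -
  have pos: "0 < 2 * r / d"
    using assms(3,4) by simp
  then have pow: "0 < (2 * r / d) ^ d"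
    by simp
  have "(2 * r / d) ^ d \<le> measure (lborel_vec d) (knowledge_set d r F)"
    using assms by (intro measure_knowledge_set_ge) auto
  then have "ln ((2 * r / d) ^ d) \<le> log_volume d r F"
    unfolding log_volume_def using pow by (subst ln_le_cancel_iff) auto
  then show ?thesis
    using pos by (simp add: ln_realpow)
qed

lemma log_volume_le:
  assumes "consistent d v F" "v \<in> unit_ball d" "d \<ge> 1" "0 < r" "r \<le> real d"
  shows "log_volume d r F \<le> real d * ln 4"
  using measure_knowledge_set_pos[OF assms(1-4)] measure_knowledge_set_le[OF _ assms(5)] assms(4)
  unfolding log_volume_def by (simp add: ln_realpow[symmetric])

lemma log_volume_update_le:
  assumes "consistent d v F'" "v \<in> unit_ball d" "d \<ge> 1" "0 < r'" "r' \<le> r" "set F \<subseteq> set F'"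
    and "x \<in> unit_ball d" "P \<Longrightarrow> (x, M, u) \<in> set F'" "0 < l" "l < 1"
  shows "log_volume d r' F' \<le> log_volume d r F
    - (if P \<and> deep_cut l r (knowledge_inf d r F x) (knowledge_sup d r F x) M u then l ^ d else 0)"
proof -
  have "consistent d v F"
    using assms(1,6) unfolding consistent_def by blast
  then have pos: "0 < measure (lborel_vec d) (knowledge_set d r F)"
    using assms(2-5) by (intro measure_knowledge_set_pos) auto
  have pos': "0 < measure (lborel_vec d) (knowledge_set d r' F')"
    using measure_knowledge_set_pos[OF assms(1-4)] .
  show ?thesis
  proof (cases "P \<and> deep_cut l r (knowledge_inf d r F x) (knowledge_sup d r F x) M u")
    case True
    have "restrict v {..<d} \<in> knowledge_set d r F"
      using \<open>consistent d v F\<close> assms(2-5) by (intro restrict_mem_knowledge_set) auto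
    then have "measure (lborel_vec d) (knowledge_set d r' F')
        \<le> (1 - l ^ d) * measure (lborel_vec d) (knowledge_set d r F)"
      using True assms by (intro measure_knowledge_set_cut[where x = x and M = M and u = u]) auto
    moreover have l_pow: "0 < 1 - l ^ d"
      using assms(3,9,10) by (simp add: power_less_one_iff)
    ultimately have "log_volume d r' F' \<le> ln ((1 - l ^ d) * measure (lborel_vec d) (knowledge_set d r F))"
      using pos' unfolding log_volume_def by simp
    also have "\<dots> = ln (1 - l ^ d) + log_volume d r F"
      using l_pow pos unfolding log_volume_def by (simp add: ln_mult)
    also have "ln (1 - l ^ d) \<le> - (l ^ d)"
      using ln_le_minus_one[OF l_pow] by simp
    finally show ?thesis
      using True by simp
  next
    case False
    have "measure (lborel_vec d) (knowledge_set d r' F') \<le> measure (lborel_vec d) (knowledge_set d r F)"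
      using assms(4,5)
      by (intro measure_mono_fmeasurable[OF knowledge_set_mono[OF assms(5,6)] knowledge_set_sets
            knowledge_set_fmeasurable]) simp
    then have "log_volume d r' F' \<le> log_volume d r F"
      using pos' unfolding log_volume_def by simp
    then show ?thesis
      using False by auto
  qed
qed

section \<open>Posting prices\<close>

lemma card_nat_interval_ge:
  assumes "0 \<le> A" "A \<le> B"
  shows "B - A - 1 \<le> card {j :: nat. A \<le> real j \<and> real j \<le> B}"
proof -
  have "{j :: nat. A \<le> real j \<and> real j \<le> B} = {nat \<lceil>A\<rceil>..nat \<lfloor>B\<rfloor>}"
    using assms by (auto simp: le_nat_iff nat_le_iff ceiling_le_iff le_floor_iff)
  moreover have "real (nat \<lceil>A\<rceil>) \<le> A + 1" "B - 1 \<le> real (nat \<lfloor>B\<rfloor>)"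
    using assms by linarith+
  moreover have "nat \<lceil>A\<rceil> \<le> Suc (nat \<lfloor>B\<rfloor>)"
    using assms by linarith
  ultimately show ?thesis
    by simp
qed

definition grid_size :: "real \<Rightarrow> real \<Rightarrow> nat" where
  "grid_size e G = nat \<lceil>4 * G / e\<rceil>"

definition grid_point :: "real \<Rightarrow> real \<Rightarrow> nat \<Rightarrow> nat \<Rightarrow> real" where
  "grid_point a G N j = a + real j * G / real N"

lemma card_grid_points_between:
  assumes "a \<le> u" "u \<le> v" "v \<le> a + G" "0 < e" "e < v - u"
  defines "N \<equiv> grid_size e G"
  shows "3 / 8 * ((v - u) / G) * real (N + 1)
    \<le> card {j \<in> {0..N}. u \<le> grid_point a G N j \<and> grid_point a G N j \<le> v}"
proof -
  have G: "e < G"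
    using assms(1-5) by linarith
  have "4 * G / e \<le> real N"
    unfolding N_def grid_size_def by linarith
  moreover have "4 < 4 * G / e"
    using G assms(4) by (simp add: field_simps)
  ultimately have N: "4 * G / e \<le> real N" "4 < real N"
    by linarith+
  define A where "A = (u - a) * real N / G"
  define B where "B = (v - a) * real N / G"
  have "e * (4 * G / e) / G \<le> (v - u) * real N / G"
    using assms(5) N(1) G assms(4) by (intro divide_right_mono mult_mono) auto
  then have BA: "4 \<le> B - A"
    unfolding A_def B_def using G assms(4) by (simp add: field_simps)
  have "(v - a) * real N \<le> G * real N"
    using assms(3) by (intro mult_right_mono) auto
  then have BN: "B \<le> real N"
    unfolding B_def using G assms(4) by (simp add: divide_le_eq mult.commute)
  have AG: "A * G / real N = u - a" and BG: "B * G / real N = v - a"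
    unfolding A_def B_def using G assms(4) N(2) by simp_all
  have "{j. A \<le> real j \<and> real j \<le> B}
      \<subseteq> {j \<in> {0..N}. u \<le> grid_point a G N j \<and> grid_point a G N j \<le> v}"
  proof
    fix j assume "j \<in> {j. A \<le> real j \<and> real j \<le> B}"
    then have j: "A \<le> real j" "real j \<le> B"
      by auto
    then have "A * G / real N \<le> real j * G / real N" "real j * G / real N \<le> B * G / real N"
      using G assms(4) N(2) by (auto intro!: divide_right_mono mult_right_mono)
    then show "j \<in> {j \<in> {0..N}. u \<le> grid_point a G N j \<and> grid_point a G N j \<le> v}"
      using j BN AG BG by (auto simp: grid_point_def)
  qed
  then have "real (card {j. A \<le> real j \<and> real j \<le> B})
      \<le> card {j \<in> {0..N}. u \<le> grid_point a G N j \<and> grid_point a G N j \<le> v}"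
    by (intro of_nat_mono card_mono) auto
  moreover have "B - A - 1 \<le> card {j. A \<le> real j \<and> real j \<le> B}"
    unfolding A_def using assms(1) G assms(4) BA by (intro card_nat_interval_ge) (auto simp: A_def)
  moreover have "3 / 8 * ((v - u) / G) * real (N + 1) \<le> 3 / 8 * ((v - u) / G) * (2 * real N)"
    using G assms(2,4) N(2) by (intro mult_left_mono) auto
  moreover have "3 / 8 * ((v - u) / G) * (2 * real N) = 3 / 4 * (B - A)"
    unfolding A_def B_def using G assms(4) by (simp add: field_simps)
  ultimately show ?thesis
    using BA by argo
qed

definition grid_prices :: "real \<Rightarrow> real \<Rightarrow> real \<Rightarrow> (real \<times> real) pmf" where
  "grid_prices e a G = map_pmf (\<lambda>j. let M = grid_point a G (grid_size e G) j in (M, M))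
     (pmf_of_set {0..grid_size e G})"

lemma expectation_uniform_ge:
  fixes V :: "nat \<Rightarrow> real"
  assumes "\<And>j. 0 \<le> V j" "\<And>j. j \<in> J \<Longrightarrow> B \<le> V j" "J \<subseteq> {0..N}"
  shows "B * card J / (N + 1) \<le> measure_pmf.expectation (pmf_of_set {0..N}) V"
proof -
  have "B * card J = (\<Sum>j\<in>{0..N}. if j \<in> J then B else 0)"
    using assms(3) by (simp add: sum.If_cases Int_absorb1)
  also have "\<dots> \<le> (\<Sum>j\<in>{0..N}. V j)"
    using assms(1,2) by (intro sum_mono) auto
  finally show ?thesis
    by (simp add: integral_pmf_of_set divide_right_mono)
qed

text \<open>The grid step is at most a quarter of \<open>bv - sv\<close>, so about a \<open>(bv - sv) / G\<close> fraction of the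
  grid lands in \<open>[sv, bv]\<close>.\<close>
lemma expectation_grid_prices_ge:
  fixes V :: "real \<times> real \<Rightarrow> real"
  assumes V: "\<And>M. 0 \<le> V (M, M)" "\<And>M. sv \<le> M \<Longrightarrow> M \<le> bv \<Longrightarrow> B \<le> V (M, M)"
    and "0 < e" "e < bv - sv" "a \<le> sv" "bv \<le> a + G" "8 * G \<le> 3 * B"
  shows "bv - sv \<le> measure_pmf.expectation (grid_prices e a G) V"
proof -
  define N where "N = grid_size e G"
  define J where "J = {j \<in> {0..N}. sv \<le> grid_point a G N j \<and> grid_point a G N j \<le> bv}"
  have G: "0 < G"
    using assms(3-6) by linarith
  have "3 / 8 * ((bv - sv) / G) * real (N + 1) \<le> card J"
    unfolding J_def N_def using assms(3-6) by (intro card_grid_points_between) auto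
  then have "B * (3 / 8 * ((bv - sv) / G) * real (N + 1)) \<le> B * card J"
    using G assms(7) by (intro mult_left_mono) auto
  then have "B * (3 / 8 * ((bv - sv) / G)) \<le> B * card J / (N + 1)"
    by (simp add: field_simps)
  also have "\<dots> \<le> measure_pmf.expectation (grid_prices e a G) V"
    unfolding grid_prices_def Let_def N_def[symmetric] integral_map_pmf
    by (rule expectation_uniform_ge) (auto simp: J_def V)
  finally have "B * (3 / 8 * ((bv - sv) / G)) \<le> measure_pmf.expectation (grid_prices e a G) V" .
  moreover have "(bv - sv) * G \<le> (bv - sv) * (3 / 8 * B)"
    using assms(3,4,7) by (intro mult_left_mono) auto
  then have "bv - sv \<le> B * (3 / 8 * ((bv - sv) / G))"
    using G by (simp add: field_simps)
  ultimately show ?thesis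
    by linarith
qed

text \<open>\<open>[a1, a2]\<close> and \<open>[b1, b2]\<close> are the current ranges of the seller's and the buyer's valuation.
  If both are shorter than \<open>e\<close>, exploit them; otherwise, if one range is long and the other
  party accepts for sure, bisect the long range; otherwise post a random common price.\<close>
definition prices :: "real \<Rightarrow> real \<Rightarrow> real \<Rightarrow> real \<Rightarrow> real \<Rightarrow> (real \<times> real) pmf" where
  "prices e a1 a2 b1 b2 =
    (if a2 - a1 \<le> e \<and> b2 - b1 \<le> e then return_pmf (if a2 \<le> b1 then (a2, b1) else (0, 0))
     else if e < a2 - a1 \<and> a1 + (a2 - a1) / 3 \<le> b1 then return_pmf (min ((a1 + a2) / 2) b1, b1)
     else if e < b2 - b1 \<and> a2 \<le> b2 - (b2 - b1) / 3 then return_pmf (a2, max ((b1 + b2) / 2) a2)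
     else grid_prices e a1 (b2 - a1))"

lemma prices_budget_balanced: "(p, q) \<in> set_pmf (prices e a1 a2 b1 b2) \<Longrightarrow> p \<le> q"
  unfolding prices_def grid_prices_def by (auto simp: Let_def split: if_splits)

lemma finite_set_pmf_prices: "finite (set_pmf (prices e a1 a2 b1 b2))"
  unfolding prices_def grid_prices_def by auto

definition trade_profit :: "real \<Rightarrow> real \<Rightarrow> real \<times> real \<Rightarrow> real" where
  "trade_profit sv bv pq = (if sv \<le> fst pq \<and> snd pq \<le> bv then snd pq - fst pq else 0)"

lemma trade_profit_exploit:
  assumes "a2 - a1 \<le> e" "b2 - b1 \<le> e" "a1 \<le> sv" "sv \<le> a2" "b1 \<le> bv" "bv \<le> b2"
  shows "max 0 (bv - sv) - 2 * e \<le> trade_profit sv bv (if a2 \<le> b1 then (a2, b1) else (0, 0))"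
  using assms by (simp add: trade_profit_def)

text \<open>Whether one of the observations that \<open>knowledge_update\<close> records after posting \<open>pq\<close> to a
  seller valuing \<open>sv\<close> and a buyer valuing \<open>bv\<close> cuts deeply into the corresponding range.\<close>
definition informative ::
    "real \<Rightarrow> real \<Rightarrow> real \<Rightarrow> real \<Rightarrow> real \<Rightarrow> real \<Rightarrow> real \<Rightarrow> real \<times> real \<Rightarrow> bool" where
  "informative r a1 a2 b1 b2 sv bv pq \<longleftrightarrow>
    (let p = fst pq; q = snd pq; f = sv \<le> p \<and> q \<le> bv in
      (f \<or> q \<le> b1) \<and> deep_cut (1 / 5) r a1 a2 p f \<or> (f \<or> a2 \<le> p) \<and> deep_cut (1 / 5) r b1 b2 q (\<not> f))"

lemma informative_bisect_seller:
  assumes "0 < e" "e < a2 - a1" "a1 + (a2 - a1) / 3 \<le> b1" "b1 \<le> bv"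
  shows "informative (e / 16) a1 a2 b1 b2 sv bv (min ((a1 + a2) / 2) b1, b1)"
proof -
  define p where "p = min ((a1 + a2) / 2) b1"
  have "a1 + (a2 - a1) / 3 \<le> p" "p \<le> (a1 + a2) / 2"
    using assms(1-3) unfolding p_def by (auto simp: min_def field_simps)
  then have "1 / 5 * (a2 - a1) < a2 - p - e / 16" "1 / 5 * (a2 - a1) < p - e / 16 - a1"
    using assms(1,2) by argo+
  then have "deep_cut (1 / 5) (e / 16) a1 a2 p (sv \<le> p)"
    unfolding deep_cut_def by simp
  then show ?thesis
    using assms(4) unfolding informative_def p_def by auto
qed

lemma informative_bisect_buyer:
  assumes "0 < e" "e < b2 - b1" "a2 \<le> b2 - (b2 - b1) / 3" "sv \<le> a2"
  shows "informative (e / 16) a1 a2 b1 b2 sv bv (a2, max ((b1 + b2) / 2) a2)"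
proof -
  define q where "q = max ((b1 + b2) / 2) a2"
  have "(b1 + b2) / 2 \<le> q" "q \<le> b2 - (b2 - b1) / 3"
    using assms(1-3) unfolding q_def by (auto simp: max_def field_simps)
  then have "1 / 5 * (b2 - b1) < b2 - q - e / 16" "1 / 5 * (b2 - b1) < q - e / 16 - b1"
    using assms(1,2) by argo+
  then have "deep_cut (1 / 5) (e / 16) b1 b2 q (\<not> q \<le> bv)"
    unfolding deep_cut_def by simp
  then show ?thesis
    using assms(4) unfolding informative_def q_def by auto
qed

lemma informative_common_price:
  assumes "0 < e" "\<not> (a2 - a1 \<le> e \<and> b2 - b1 \<le> e)"
    "\<not> (e < a2 - a1 \<and> a1 + (a2 - a1) / 3 \<le> b1)" "\<not> (e < b2 - b1 \<and> a2 \<le> b2 - (b2 - b1) / 3)"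
    "a1 \<le> a2" "b1 \<le> b2" "sv \<le> M" "M \<le> bv"
  shows "informative (e / 16) a1 a2 b1 b2 sv bv (M, M)"
proof -
  have "deep_cut (1 / 5) (e / 16) a1 a2 M True \<or> deep_cut (1 / 5) (e / 16) b1 b2 M False"
  proof (cases "b2 - b1 \<le> a2 - a1")
    case True
    then have "e < a2 - a1" "b1 < a1 + (a2 - a1) / 3"
      using assms(2,3) by auto
    then show ?thesis
      using True assms(1) unfolding deep_cut_def by simp argo
  next
    case False
    then have "e < b2 - b1" "b2 - (b2 - b1) / 3 < a2"
      using assms(2,4) by auto
    then show ?thesis
      using False assms(1) unfolding deep_cut_def by simp argo
  qed
  then show ?thesis
    using assms(7,8) unfolding informative_def by auto
qed

lemma deterministic_prices:
  assumes e: "0 < e" and s: "a1 \<le> sv" "sv \<le> a2" and b: "b1 \<le> bv" "bv \<le> b2"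
    and branch: "a2 - a1 \<le> e \<and> b2 - b1 \<le> e \<or> e < a2 - a1 \<and> a1 + (a2 - a1) / 3 \<le> b1
      \<or> e < b2 - b1 \<and> a2 \<le> b2 - (b2 - b1) / 3"
  obtains pq where "prices e a1 a2 b1 b2 = return_pmf pq"
    and "max 0 (bv - sv) - 2 * e \<le> trade_profit sv bv pq
      \<or> informative (e / 16) a1 a2 b1 b2 sv bv pq \<and> fst pq \<le> snd pq"
proof -
  consider (exploit) "a2 - a1 \<le> e \<and> b2 - b1 \<le> e"
    | (bisect_seller) "\<not> (a2 - a1 \<le> e \<and> b2 - b1 \<le> e)" "e < a2 - a1 \<and> a1 + (a2 - a1) / 3 \<le> b1"
    | (bisect_buyer) "\<not> (a2 - a1 \<le> e \<and> b2 - b1 \<le> e)" "\<not> (e < a2 - a1 \<and> a1 + (a2 - a1) / 3 \<le> b1)"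
        "e < b2 - b1 \<and> a2 \<le> b2 - (b2 - b1) / 3"
    using branch by argo
  then show ?thesis
  proof cases
    case exploit
    then show ?thesis
      using that trade_profit_exploit[OF _ _ s b] by (simp add: prices_def)
  next
    case bisect_seller
    then show ?thesis
      using that informative_bisect_seller[OF e _ _ b(1)] by (simp add: prices_def)
  next
    case bisect_buyer
    then show ?thesis
      using that informative_bisect_buyer[OF e _ _ s(2)] by (auto simp: prices_def)
  qed
qed

lemma expected_gain_prices:
  assumes e: "0 < e" and s: "a1 \<le> sv" "sv \<le> a2" and b: "b1 \<le> bv" "bv \<le> b2"
    and B: "0 \<le> B" "8 * (b2 - a1) \<le> 3 * B"
  shows "max 0 (bv - sv) - 2 * e \<le> measure_pmf.expectation (prices e a1 a2 b1 b2)
    (\<lambda>pq. trade_profit sv bv pq + (if informative (e / 16) a1 a2 b1 b2 sv bv pq then B else 0))"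
    (is "_ \<le> measure_pmf.expectation _ ?V")
proof (cases "a2 - a1 \<le> e \<and> b2 - b1 \<le> e \<or> e < a2 - a1 \<and> a1 + (a2 - a1) / 3 \<le> b1
    \<or> e < b2 - b1 \<and> a2 \<le> b2 - (b2 - b1) / 3")
  case True
  then obtain pq where prices: "prices e a1 a2 b1 b2 = return_pmf pq"
    and pq: "max 0 (bv - sv) - 2 * e \<le> trade_profit sv bv pq
      \<or> informative (e / 16) a1 a2 b1 b2 sv bv pq \<and> fst pq \<le> snd pq"
    using deterministic_prices[OF e s b] by blast
  have "max 0 (bv - sv) - 2 * e \<le> ?V pq"
    using pq B e s b by (auto simp: trade_profit_def max_def)
  then show ?thesis
    unfolding prices by simp
next
  case False
  then have grid: "\<not> (a2 - a1 \<le> e \<and> b2 - b1 \<le> e)" "\<not> (e < a2 - a1 \<and> a1 + (a2 - a1) / 3 \<le> b1)"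
    "\<not> (e < b2 - b1 \<and> a2 \<le> b2 - (b2 - b1) / 3)"
    by blast+
  then have prices: "prices e a1 a2 b1 b2 = grid_prices e a1 (b2 - a1)"
    by (auto simp: prices_def)
  show ?thesis
  proof (cases "bv - sv \<le> e")
    case True
    have "0 \<le> measure_pmf.expectation (prices e a1 a2 b1 b2) ?V"
      using B(1) prices_budget_balanced
      by (intro integral_nonneg_AE AE_pmfI) (force simp: trade_profit_def)
    then show ?thesis
      using True e by (simp add: max_def)
  next
    case False
    have "bv - sv \<le> measure_pmf.expectation (grid_prices e a1 (b2 - a1)) ?V"
      using False s b e B
      by (intro expectation_grid_prices_ge[where B = B])
        (auto simp: trade_profit_def intro!: informative_common_price[OF e grid])
    then show ?thesis
      using False e prices by simp
  qed
qed

section \<open>The learner\<close>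

definition eps :: "nat \<Rightarrow> real" where
  "eps t = 1 / (real t + 1)"

text \<open>A failed trade is attributed to the seller if the buyer surely accepted (its price was at most
  the lower end of the buyer's range), and to the buyer if the seller surely accepted.\<close>
definition knowledge_update ::
    "nat \<Rightarrow> nat \<Rightarrow> obs list \<times> obs list \<Rightarrow> vec \<times> real \<times> real \<times> bool \<Rightarrow> obs list \<times> obs list" where
  "knowledge_update d t K ent = (case ent of (x, p, q, f) \<Rightarrow>
     (fst K @ (if f \<or> q \<le> knowledge_inf d (eps t / 16) (snd K) x then [(x, p, f)] else []),
      snd K @ (if f \<or> knowledge_sup d (eps t / 16) (fst K) x \<le> p then [(x, q, \<not> f)] else [])))"

definition knowledge :: "nat \<Rightarrow> hist \<Rightarrow> obs list \<times> obs list" where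
  "knowledge d h = foldl (\<lambda>K (t, ent). knowledge_update d t K ent) ([], []) (List.enumerate 0 h)"

lemma knowledge_Nil [simp]: "knowledge d [] = ([], [])"
  by (simp add: knowledge_def)

lemma knowledge_snoc [simp]: "knowledge d (h @ [ent]) = knowledge_update d (length h) (knowledge d h) ent"
  by (simp add: knowledge_def enumerate_append_eq)

definition trade_learner :: "nat \<Rightarrow> learner" where
  "trade_learner d h x = (let r = eps (length h) / 16; K = knowledge d h in
     prices (eps (length h)) (knowledge_inf d r (fst K) x) (knowledge_sup d r (fst K) x)
       (knowledge_inf d r (snd K) x) (knowledge_sup d r (snd K) x))"

lemma trade_learner_budget_balanced: "budget_balanced (trade_learner d)"
  unfolding budget_balanced_def trade_learner_def Let_def using prices_budget_balanced by blast

definition round_entry :: "nat \<Rightarrow> vec \<Rightarrow> vec \<Rightarrow> vec \<Rightarrow> real \<times> real \<Rightarrow> vec \<times> real \<times> real \<times> bool" where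
  "round_entry d s b x pq = (x, fst pq, snd pq, ip d s x \<le> fst pq \<and> snd pq \<le> ip d b x)"

lemma run_Suc_eq_map:
  "run d A s b x (Suc t) = run d A s b x t \<bind> (\<lambda>h. map_pmf (\<lambda>pq. h @ [round_entry d s b (x t) pq]) (A h (x t)))"
  by (simp add: map_pmf_def round_entry_def)

lemma hist_profit_snoc_round_entry:
  "hist_profit (h @ [round_entry d s b x pq]) = hist_profit h + trade_profit (ip d s x) (ip d b x) pq"
  by (simp add: hist_profit_def round_entry_def trade_profit_def)

lemma finite_set_pmf_run: "finite (set_pmf (run d (trade_learner d) s b x t))"
  by (induction t) (simp_all add: run_Suc_eq_map trade_learner_def Let_def finite_set_pmf_prices)

lemma length_run: "h \<in> set_pmf (run d A s b x t) \<Longrightarrow> length h = t"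
  by (induction t arbitrary: h) (auto simp: run_Suc_eq_map)

lemma knowledge_inf_le_ip:
  assumes "consistent d v F" "v \<in> unit_ball d" "d \<ge> 1" "0 \<le> r" "x \<in> unit_ball d"
  shows "knowledge_inf d r F x \<le> ip d v x"
  using knowledge_inf_le[OF restrict_mem_knowledge_set[OF assms(1-4)] assms(5,4)]
  by (simp add: ip_restrict)

lemma ip_le_knowledge_sup:
  assumes "consistent d v F" "v \<in> unit_ball d" "d \<ge> 1" "0 \<le> r" "x \<in> unit_ball d"
  shows "ip d v x \<le> knowledge_sup d r F x"
  using le_knowledge_sup[OF restrict_mem_knowledge_set[OF assms(1-4)] assms(5,4)]
  by (simp add: ip_restrict)

lemma consistent_knowledge_update:
  assumes s: "s \<in> unit_ball d" "consistent d s (fst K)" and b: "b \<in> unit_ball d" "consistent d b (snd K)"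
    and d: "d \<ge> 1" and x: "x \<in> unit_ball d"
  shows "consistent d s (fst (knowledge_update d t K (round_entry d s b x pq)))"
    and "consistent d b (snd (knowledge_update d t K (round_entry d s b x pq)))"
proof -
  have r: "0 \<le> eps t / 16"
    by (simp add: eps_def)
  have "knowledge_inf d (eps t / 16) (snd K) x \<le> ip d b x"
    using knowledge_inf_le_ip[OF b(2,1) d r x] .
  then show "consistent d s (fst (knowledge_update d t K (round_entry d s b x pq)))"
    using s(2) x unfolding consistent_def knowledge_update_def round_entry_def by auto
  have "ip d s x \<le> knowledge_sup d (eps t / 16) (fst K) x"
    using ip_le_knowledge_sup[OF s(2,1) d r x] .
  then show "consistent d b (snd (knowledge_update d t K (round_entry d s b x pq)))"
    using b(2) x unfolding consistent_def knowledge_update_def round_entry_def by auto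
qed

lemma consistent_knowledge_run:
  assumes "s \<in> unit_ball d" "b \<in> unit_ball d" "d \<ge> 1" "\<And>t. x t \<in> unit_ball d"
    and "h \<in> set_pmf (run d (trade_learner d) s b x t)"
  shows "consistent d s (fst (knowledge d h)) \<and> consistent d b (snd (knowledge d h))"
  using assms(5)
proof (induction t arbitrary: h)
  case 0
  then show ?case
    by (simp add: consistent_def)
next
  case (Suc t)
  then obtain h' pq where "h' \<in> set_pmf (run d (trade_learner d) s b x t)"
    and "h = h' @ [round_entry d s b (x t) pq]"
    unfolding run_Suc_eq_map by auto
  then show ?case
    using Suc.IH consistent_knowledge_update assms(1-4) by auto
qed

section \<open>Amortized profit and regret\<close>

definition potential :: "nat \<Rightarrow> hist \<Rightarrow> real" where
  "potential d h = log_volume d (eps (length h) / 16) (fst (knowledge d h))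
    + log_volume d (eps (length h) / 16) (snd (knowledge d h))"

lemma potential_snoc_le:
  assumes s: "s \<in> unit_ball d" "consistent d s (fst (knowledge d h))"
    and b: "b \<in> unit_ball d" "consistent d b (snd (knowledge d h))"
    and d: "d \<ge> 1" and x: "x \<in> unit_ball d"
  defines "r \<equiv> eps (length h) / 16" and "K \<equiv> knowledge d h"
  shows "potential d (h @ [round_entry d s b x pq]) \<le> potential d h -
    (if informative r (knowledge_inf d r (fst K) x) (knowledge_sup d r (fst K) x)
        (knowledge_inf d r (snd K) x) (knowledge_sup d r (snd K) x) (ip d s x) (ip d b x) pq
     then (1 / 5) ^ d else 0)"
proof -
  define r' where "r' = eps (Suc (length h)) / 16"
  define K' where "K' = knowledge_update d (length h) K (round_entry d s b x pq)"
  define f where "f = (ip d s x \<le> fst pq \<and> snd pq \<le> ip d b x)"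
  define a1 where "a1 = knowledge_inf d r (fst K) x"
  define a2 where "a2 = knowledge_sup d r (fst K) x"
  define b1 where "b1 = knowledge_inf d r (snd K) x"
  define b2 where "b2 = knowledge_sup d r (snd K) x"
  have r: "0 < r'" "r' \<le> r"
    unfolding r_def r'_def eps_def by (simp_all add: frac_le)
  have sub: "set (fst K) \<subseteq> set (fst K')" "set (snd K) \<subseteq> set (snd K')"
    unfolding K'_def by (auto simp: knowledge_update_def round_entry_def)
  have cons: "consistent d s (fst K')" "consistent d b (snd K')"
    unfolding K'_def K_def using consistent_knowledge_update[OF s b d x] by auto
  have "(x, fst pq, f) \<in> set (fst K')" if "f \<or> snd pq \<le> b1"
    using that unfolding K'_def r_def b1_def f_def by (simp add: knowledge_update_def round_entry_def)
  from log_volume_update_le[OF cons(1) s(1) d r sub(1) x this, where l = "1 / 5"]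
  have seller: "log_volume d r' (fst K') \<le> log_volume d r (fst K)
      - (if (f \<or> snd pq \<le> b1) \<and> deep_cut (1 / 5) r a1 a2 (fst pq) f then (1 / 5) ^ d else 0)"
    unfolding a1_def a2_def by simp
  have "(x, snd pq, \<not> f) \<in> set (snd K')" if "f \<or> a2 \<le> fst pq"
    using that unfolding K'_def r_def a2_def f_def by (simp add: knowledge_update_def round_entry_def)
  from log_volume_update_le[OF cons(2) b(1) d r sub(2) x this, where l = "1 / 5"]
  have buyer: "log_volume d r' (snd K') \<le> log_volume d r (snd K)
      - (if (f \<or> a2 \<le> fst pq) \<and> deep_cut (1 / 5) r b1 b2 (snd pq) (\<not> f) then (1 / 5) ^ d else 0)"
    unfolding b1_def b2_def by simp
  have informative_iff: "informative r a1 a2 b1 b2 (ip d s x) (ip d b x) pq \<longleftrightarrow>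
      (f \<or> snd pq \<le> b1) \<and> deep_cut (1 / 5) r a1 a2 (fst pq) f
      \<or> (f \<or> a2 \<le> fst pq) \<and> deep_cut (1 / 5) r b1 b2 (snd pq) (\<not> f)"
    by (simp add: informative_def f_def Let_def)
  have potential': "potential d (h @ [round_entry d s b x pq])
      = log_volume d r' (fst K') + log_volume d r' (snd K')"
    unfolding potential_def K'_def K_def r'_def by simp
  have potential: "potential d h = log_volume d r (fst K) + log_volume d r (snd K)"
    unfolding potential_def K_def r_def by simp
  have combine: "X' + Y' \<le> X + Y - (if P \<or> Q then c else 0)"
    if "X' \<le> X - (if P then c else 0)" "Y' \<le> Y - (if Q then c else 0)" "0 \<le> c"
    for X' Y' X Y c :: real and P Q
    using that by (cases P; cases Q) auto
  show ?thesis
    unfolding a1_def[symmetric] a2_def[symmetric] b1_def[symmetric] b2_def[symmetric]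
      informative_iff potential' potential
    by (rule combine[OF seller buyer]) simp
qed

text \<open>A deep cut lowers the potential by at least \<open>5 ^ (-d)\<close>, which is worth \<open>16 d\<close> of
  amortized profit.\<close>
definition amortized_profit :: "nat \<Rightarrow> hist \<Rightarrow> real" where
  "amortized_profit d h = hist_profit h - 16 * real d * 5 ^ d * potential d h"

lemma amortized_profit_snoc_ge:
  assumes s: "s \<in> unit_ball d" "consistent d s (fst (knowledge d h))"
    and b: "b \<in> unit_ball d" "consistent d b (snd (knowledge d h))"
    and d: "d \<ge> 1" and x: "x \<in> unit_ball d"
  defines "r \<equiv> eps (length h) / 16" and "K \<equiv> knowledge d h"
  shows "amortized_profit d h + (trade_profit (ip d s x) (ip d b x) pq
      + (if informative r (knowledge_inf d r (fst K) x) (knowledge_sup d r (fst K) x)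
          (knowledge_inf d r (snd K) x) (knowledge_sup d r (snd K) x) (ip d s x) (ip d b x) pq
         then 16 * real d else 0))
    \<le> amortized_profit d (h @ [round_entry d s b x pq])"
proof -
  have "16 * real d * 5 ^ d * potential d (h @ [round_entry d s b x pq])
      \<le> 16 * real d * 5 ^ d * (potential d h
        - (if informative r (knowledge_inf d r (fst K) x) (knowledge_sup d r (fst K) x)
            (knowledge_inf d r (snd K) x) (knowledge_sup d r (snd K) x) (ip d s x) (ip d b x) pq
           then (1 / 5) ^ d else 0))"
    using potential_snoc_le[OF s b d x, of pq] unfolding r_def K_def by (intro mult_left_mono) auto
  then show ?thesis
    unfolding amortized_profit_def hist_profit_snoc_round_entry
    by (auto simp: algebra_simps power_one_over split: if_splits)
qed

lemma expected_amortized_profit_step: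
  assumes s: "s \<in> unit_ball d" "consistent d s (fst (knowledge d h))"
    and b: "b \<in> unit_ball d" "consistent d b (snd (knowledge d h))"
    and d: "d \<ge> 1" and x: "x \<in> unit_ball d"
  shows "amortized_profit d h + max 0 (ip d b x - ip d s x) - 2 * eps (length h)
    \<le> measure_pmf.expectation (trade_learner d h x)
        (\<lambda>pq. amortized_profit d (h @ [round_entry d s b x pq]))"
proof -
  define e where "e = eps (length h)"
  define K where "K = knowledge d h"
  define a1 where "a1 = knowledge_inf d (e / 16) (fst K) x"
  define a2 where "a2 = knowledge_sup d (e / 16) (fst K) x"
  define b1 where "b1 = knowledge_inf d (e / 16) (snd K) x"
  define b2 where "b2 = knowledge_sup d (e / 16) (snd K) x"
  define V where "V pq = trade_profit (ip d s x) (ip d b x) pq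
    + (if informative (e / 16) a1 a2 b1 b2 (ip d s x) (ip d b x) pq then 16 * real d else 0)" for pq
  have e: "0 < e" "e \<le> 1"
    unfolding e_def eps_def by (simp_all add: field_simps)
  have "0 \<le> e / 16"
    using e by simp
  then have ne: "knowledge_set d (e / 16) (fst K) \<noteq> {}" "knowledge_set d (e / 16) (snd K) \<noteq> {}"
    using restrict_mem_knowledge_set[OF s(2,1) d] restrict_mem_knowledge_set[OF b(2,1) d]
    unfolding K_def by blast+
  have "- (d + e / 16) \<le> a1" "b2 \<le> d + e / 16"
    unfolding a1_def b2_def using e knowledge_inf_ge[OF ne(1) x] knowledge_sup_le[OF ne(2) x] by auto
  moreover have "1 \<le> real d"
    using d by simp
  ultimately have width: "8 * (b2 - a1) \<le> 3 * (16 * real d)"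
    using e by argo
  have "a1 \<le> ip d s x" "ip d s x \<le> a2" "b1 \<le> ip d b x" "ip d b x \<le> b2"
    unfolding a1_def a2_def b1_def b2_def K_def using e(1)
    by (intro knowledge_inf_le_ip ip_le_knowledge_sup s b d x; simp)+
  then have "max 0 (ip d b x - ip d s x) - 2 * e \<le> measure_pmf.expectation (prices e a1 a2 b1 b2) V"
    unfolding V_def using e width by (intro expected_gain_prices) auto
  also have "\<dots> = measure_pmf.expectation (prices e a1 a2 b1 b2) (\<lambda>pq. amortized_profit d h + V pq)
      - amortized_profit d h"
    by (simp add: integrable_measure_pmf_finite finite_set_pmf_prices)
  also have "\<dots> \<le> measure_pmf.expectation (prices e a1 a2 b1 b2)
      (\<lambda>pq. amortized_profit d (h @ [round_entry d s b x pq])) - amortized_profit d h"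
    using amortized_profit_snoc_ge[OF s b d x]
    unfolding V_def e_def K_def a1_def a2_def b1_def b2_def
    by (intro diff_right_mono integral_mono) (simp_all add: integrable_measure_pmf_finite finite_set_pmf_prices)
  also have "prices e a1 a2 b1 b2 = trade_learner d h x"
    by (simp add: trade_learner_def Let_def e_def K_def a1_def a2_def b1_def b2_def)
  finally show ?thesis
    unfolding e_def by simp
qed

lemma expectation_bind_pmf_ge:
  fixes g :: "'a \<Rightarrow> real" and f :: "'b \<Rightarrow> real"
  assumes "finite (set_pmf p)" "\<And>x. x \<in> set_pmf p \<Longrightarrow> finite (set_pmf (q x))"
    and "\<And>x. x \<in> set_pmf p \<Longrightarrow> g x \<le> measure_pmf.expectation (q x) f"
  shows "measure_pmf.expectation p g \<le> measure_pmf.expectation (p \<bind> q) f"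
proof -
  have "measure_pmf.expectation p g = (\<Sum>x\<in>set_pmf p. pmf p x * g x)"
    using assms(1) by (subst integral_measure_pmf[of "set_pmf p"]) auto
  also have "\<dots> \<le> (\<Sum>x\<in>set_pmf p. pmf p x * measure_pmf.expectation (q x) f)"
    using assms(3) by (intro sum_mono mult_left_mono) auto
  also have "\<dots> = measure_pmf.expectation (p \<bind> q) f"
    using pmf_expectation_bind[of "set_pmf p" q p f] assms(1,2) by simp
  finally show ?thesis .
qed

lemma expected_amortized_profit_run:
  assumes "s \<in> unit_ball d" "b \<in> unit_ball d" "d \<ge> 1" "\<And>t. x t \<in> unit_ball d"
  shows "amortized_profit d [] + (\<Sum>t<T. max 0 (ip d b (x t) - ip d s (x t)) - 2 * eps t)
    \<le> measure_pmf.expectation (run d (trade_learner d) s b x T) (amortized_profit d)"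
proof (induction T)
  case 0
  then show ?case
    by simp
next
  case (Suc t)
  define c where "c = max 0 (ip d b (x t) - ip d s (x t)) - 2 * eps t"
  let ?R = "run d (trade_learner d) s b x t"
  have finite: "finite (set_pmf ?R)"
    by (rule finite_set_pmf_run)
  have "measure_pmf.expectation ?R (\<lambda>h. amortized_profit d h + c)
      \<le> measure_pmf.expectation (run d (trade_learner d) s b x (Suc t)) (amortized_profit d)"
    unfolding run_Suc_eq_map
  proof (rule expectation_bind_pmf_ge[OF finite])
    fix h assume h: "h \<in> set_pmf ?R"
    show "finite (set_pmf (map_pmf (\<lambda>pq. h @ [round_entry d s b (x t) pq]) (trade_learner d h (x t))))"
      by (simp add: trade_learner_def Let_def finite_set_pmf_prices)
    have "consistent d s (fst (knowledge d h))" "consistent d b (snd (knowledge d h))"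
      using consistent_knowledge_run[OF assms h] by auto
    from expected_amortized_profit_step[OF assms(1) this(1) assms(2) this(2) assms(3) assms(4)]
    show "amortized_profit d h + c \<le> measure_pmf.expectation
        (map_pmf (\<lambda>pq. h @ [round_entry d s b (x t) pq]) (trade_learner d h (x t))) (amortized_profit d)"
      unfolding c_def length_run[OF h] by (simp add: add_diff_eq)
  qed
  moreover have "measure_pmf.expectation ?R (\<lambda>h. amortized_profit d h + c)
      = measure_pmf.expectation ?R (amortized_profit d) + c"
    using finite by (simp add: integrable_measure_pmf_finite)
  ultimately show ?case
    using Suc.IH unfolding c_def by simp
qed

lemma potential_Nil_le:
  assumes "d \<ge> 1"
  shows "potential d [] \<le> 2 * real d * ln 4"
proof -
  have "(\<lambda>_. 0) \<in> unit_ball d"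
    by (simp add: unit_ball_def)
  then have "log_volume d (1 / 16) [] \<le> real d * ln 4"
    using assms by (intro log_volume_le) (auto simp: consistent_def)
  then show ?thesis
    by (simp add: potential_def eps_def)
qed

lemma potential_ge:
  assumes "s \<in> unit_ball d" "consistent d s (fst (knowledge d h))"
    and "b \<in> unit_ball d" "consistent d b (snd (knowledge d h))" and "d \<ge> 1"
  shows "2 * real d * ln (eps (length h) / (8 * real d)) \<le> potential d h"
proof -
  have "0 < eps (length h) / 16"
    by (simp add: eps_def)
  moreover have "2 * (eps (length h) / 16) / real d = eps (length h) / (8 * real d)"
    by simp
  ultimately show ?thesis
    using log_volume_ge[OF assms(2,1,5), of "eps (length h) / 16"]
      log_volume_ge[OF assms(4,3,5), of "eps (length h) / 16"]
    by (simp add: potential_def)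
qed

lemma sum_eps: "(\<Sum>t<T. eps t) = harm T"
  by (induction T) (simp_all add: eps_def harm_def harm_Suc inverse_eq_divide add.commute)

lemma expected_profit_run_ge:
  assumes s: "s \<in> unit_ball d" and b: "b \<in> unit_ball d" and d: "d \<ge> 1"
    and x: "\<And>t. x t \<in> unit_ball d"
  defines "K \<equiv> 16 * real d * 5 ^ d"
  shows "(\<Sum>t<T. max 0 (ip d b (x t) - ip d s (x t))) - 2 * harm T
      - K * (2 * real d * ln 4 - 2 * real d * ln (eps T / (8 * real d)))
    \<le> measure_pmf.expectation (run d (trade_learner d) s b x T) hist_profit"
proof -
  let ?R = "run d (trade_learner d) s b x T"
  have finite: "finite (set_pmf ?R)"
    by (rule finite_set_pmf_run)
  have "K * (2 * real d * ln (eps T / (8 * real d))) \<le> K * potential d h" if "h \<in> set_pmf ?R" for h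
    using potential_ge[OF s _ b _ d] consistent_knowledge_run[OF s b d x that] length_run[OF that]
    by (intro mult_left_mono) (auto simp: K_def)
  then have "K * (2 * real d * ln (eps T / (8 * real d))) \<le> measure_pmf.expectation ?R (\<lambda>h. K * potential d h)"
    using finite
    by (intro measure_pmf.integral_ge_const) (auto simp: integrable_measure_pmf_finite AE_measure_pmf_iff)
  moreover have "(\<Sum>t<T. max 0 (ip d b (x t) - ip d s (x t))) - 2 * harm T - K * potential d []
      \<le> measure_pmf.expectation ?R (amortized_profit d)"
    using expected_amortized_profit_run[OF s b d x, where T = T]
    by (simp add: sum_subtractf sum_distrib_left[symmetric] sum_eps amortized_profit_def K_def
        hist_profit_def)
  moreover have "K * potential d [] \<le> K * (2 * real d * ln 4)"
    using potential_Nil_le[OF d] by (intro mult_left_mono) (auto simp: K_def)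
  moreover have "measure_pmf.expectation ?R hist_profit
      = measure_pmf.expectation ?R (\<lambda>h. amortized_profit d h + K * potential d h)"
    by (simp add: amortized_profit_def K_def)
  then have "measure_pmf.expectation ?R hist_profit
      = measure_pmf.expectation ?R (amortized_profit d) + measure_pmf.expectation ?R (\<lambda>h. K * potential d h)"
    using finite by (simp add: integrable_measure_pmf_finite)
  ultimately show ?thesis
    by (simp add: algebra_simps)
qed

lemma regret_trade_learner_le:
  assumes "s \<in> unit_ball d" "b \<in> unit_ball d" "d \<ge> 1" "\<And>t. x t \<in> unit_ball d"
  shows "regret d (trade_learner d) s b x T
    \<le> 2 * harm T + 32 * real d ^ 2 * 5 ^ d * ln (32 * real d * (real T + 1))"
proof -
  have "0 < eps T / (8 * real d)"
    using assms(3) by (simp add: eps_def)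
  then have "ln 4 - ln (eps T / (8 * real d)) = ln (4 / (eps T / (8 * real d)))"
    by (intro ln_divide_pos[symmetric]) auto
  also have "4 / (eps T / (8 * real d)) = 32 * real d * (real T + 1)"
    using assms(3) by (simp add: eps_def field_simps)
  finally have "2 * real d * ln 4 - 2 * real d * ln (eps T / (8 * real d))
      = 2 * real d * ln (32 * real d * (real T + 1))"
    by (simp flip: right_diff_distrib)
  then show ?thesis
    using expected_profit_run_ge[OF assms, where T = T] unfolding regret_def
    by (simp add: power2_eq_square algebra_simps)
qed

section \<open>Numerical bounds\<close>

lemma square_mult_5_power_le: "real d ^ 2 * 5 ^ d \<le> 5832 * 6 ^ d"
proof -
  have "1 / 6 \<le> ln (6 / 5 :: real)"
    using ln_le_minus_one[of "5 / 6"] by (simp add: ln_div)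
  then have "real d / 6 \<le> real d * ln (6 / 5)"
    using mult_left_mono[of "1 / 6" "ln (6 / 5)" "real d"] by simp
  then have "exp (real d / 6) \<le> exp (real d * ln (6 / 5))"
    by simp
  also have "\<dots> = (6 / 5) ^ d"
    by (simp add: exp_of_nat_mult)
  finally have "exp (real d / 18) ^ 3 \<le> (6 / 5) ^ d"
    by (simp add: exp_of_nat_mult[symmetric])
  moreover have "real d / 18 \<le> exp (real d / 18)"
    using exp_ge_add_one_self[of "real d / 18"] by linarith
  then have "(real d / 18) ^ 3 \<le> exp (real d / 18) ^ 3"
    by (intro power_mono) auto
  moreover have "real d ^ 2 \<le> real d ^ 3"
    by (cases d) (simp_all add: power_increasing)
  ultimately have "real d ^ 2 * 5 ^ d \<le> 5832 * (6 / 5) ^ d * 5 ^ d"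
    by (intro mult_right_mono) (simp_all add: power_divide)
  then show ?thesis
    by (simp add: mult.assoc power_mult_distrib[symmetric])
qed

lemma half_le_ln:
  fixes x :: real
  assumes "2 \<le> x"
  shows "1 / 2 \<le> ln x"
proof -
  have "1 / 2 \<le> ln (2 :: real)"
    using ln_le_minus_one[of "1 / 2"] by (simp add: ln_div)
  also have "\<dots> \<le> ln x"
    using assms by simp
  finally show ?thesis .
qed

lemma harm_le_3_ln:
  assumes "T \<ge> 2"
  shows "harm T \<le> 3 * ln (real T)"
proof -
  have "harm T - ln (real T) \<le> harm 1 - ln (real 1)"
    using assms by (intro euler_mascheroni_sequence_decreasing) auto
  then show ?thesis
    using half_le_ln[of "real T"] assms by (simp add: harm_def)
qed

lemma ln_32_mult_le:
  assumes d: "d \<ge> 1" and T: "T \<ge> 2"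
  shows "ln (32 * real d * (real T + 1)) \<le> 8 * real d * ln (real T)"
proof -
  have "32 * real d * (real T + 1) \<le> real T ^ 5 * real T ^ d * real T ^ 2"
  proof (intro mult_mono)
    show "32 \<le> real T ^ 5"
      using power_mono[of 2 "real T" 5] T by simp
    have "real d \<le> 2 ^ d"
      using less_exp[of d] by (simp add: less_imp_le)
    also have "\<dots> \<le> real T ^ d"
      using T by (intro power_mono) auto
    finally show "real d \<le> real T ^ d" .
    have "real T * 2 \<le> real T * real T"
      using T by (intro mult_left_mono) auto
    moreover have "2 \<le> real T"
      using T by simp
    ultimately show "real T + 1 \<le> real T ^ 2"
      unfolding power2_eq_square by linarith
  qed (use T in auto)
  also have "\<dots> = real T ^ (d + 7)"
  proof -
    have "real T ^ (d + 7) = real T ^ d * real T ^ 5 * real T ^ 2"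
      by (simp add: power_add[symmetric] add.commute)
    then show ?thesis
      by (simp add: mult_ac)
  qed
  finally have "ln (32 * real d * (real T + 1)) \<le> ln (real T ^ (d + 7))"
    using d T by simp
  also have "\<dots> = (real d + 7) * ln (real T)"
    using T by (simp add: ln_realpow)
  also have "\<dots> \<le> 8 * real d * ln (real T)"
    using d half_le_ln[of "real T"] T by (intro mult_right_mono) auto
  finally show ?thesis .
qed

lemma regret_bound_simplified:
  assumes d: "d \<ge> 1" and T: "T \<ge> 2"
  shows "2 * harm T + 32 * real d ^ 2 * 5 ^ d * ln (32 * real d * (real T + 1))
    \<le> 1500000 * real d * 6 ^ d * ln (real T)"
proof -
  define X where "X = real d * 6 ^ d * ln (real T)"
  have lnT: "0 \<le> ln (real T)"
    using T by simp
  have "1 * 1 \<le> real d * 6 ^ d"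
    using d by (intro mult_mono) auto
  then have harm: "2 * harm T \<le> 6 * X"
    using harm_le_3_ln[OF T] lnT mult_right_mono[of 1 "real d * 6 ^ d" "ln (real T)"]
    unfolding X_def by linarith
  have "32 * real d ^ 2 * 5 ^ d * ln (32 * real d * (real T + 1))
      \<le> 32 * real d ^ 2 * 5 ^ d * (8 * real d * ln (real T))"
    using ln_32_mult_le[OF d T] by (intro mult_left_mono) auto
  also have "\<dots> = 256 * (real d * ln (real T)) * (real d ^ 2 * 5 ^ d)"
    by (simp add: algebra_simps)
  also have "\<dots> \<le> 256 * (real d * ln (real T)) * (5832 * 6 ^ d)"
    using square_mult_5_power_le lnT by (intro mult_left_mono) auto
  also have "\<dots> = 1492992 * X"
    unfolding X_def by simp
  finally have "32 * real d ^ 2 * 5 ^ d * ln (32 * real d * (real T + 1)) \<le> 1492992 * X" .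
  moreover have "0 \<le> X"
    unfolding X_def using lnT by simp
  moreover have "1500000 * real d * 6 ^ d * ln (real T) = 1500000 * X"
    unfolding X_def by simp
  ultimately show ?thesis
    using harm by linarith
qed

theorem theorem5p6:
  shows "\<exists>C::real. \<forall>d::nat. d \<ge> 1 \<longrightarrow>
    (\<exists>A::learner. budget_balanced A \<and>
      (\<forall>s b x T. s \<in> unit_ball d \<longrightarrow> b \<in> unit_ball d \<longrightarrow> (\<forall>t. x t \<in> unit_ball d) \<longrightarrow>
         T \<ge> 2 \<longrightarrow> regret d A s b x T \<le> C * real d * 6 ^ d * ln (real T)))"
proof (rule exI[where x = 1500000], intro allI impI)
  fix d :: nat assume d: "d \<ge> 1"
  show "\<exists>A. budget_balanced A \<and>
      (\<forall>s b x T. s \<in> unit_ball d \<longrightarrow> b \<in> unit_ball d \<longrightarrow> (\<forall>t. x t \<in> unit_ball d) \<longrightarrow>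
         T \<ge> 2 \<longrightarrow> regret d A s b x T \<le> 1500000 * real d * 6 ^ d * ln (real T))"
  proof (rule exI[where x = "trade_learner d"], intro conjI allI impI)
    show "budget_balanced (trade_learner d)"
      by (rule trade_learner_budget_balanced)
    fix s b :: vec and x :: "nat \<Rightarrow> vec" and T :: nat
    assume "s \<in> unit_ball d" "b \<in> unit_ball d" "\<forall>t. x t \<in> unit_ball d" "T \<ge> 2"
    then show "regret d (trade_learner d) s b x T \<le> 1500000 * real d * 6 ^ d * ln (real T)"
      using regret_trade_learner_le[OF _ _ d, of s b x T] regret_bound_simplified[OF d, of T] by simp
  qed
qed

end
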